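(* Let $P$ be a definite objective condition on natural numbers. If every accessible natural number satisfies $P$, then there is a huge (i.e. non-accessible) natural number satisfying $P$.
   Context: The framework is a mathematics of finite sets with an undefined predicate "accessible" on natural numbers obeying: $0$ and $1$ are accessible; sums and products of accessible numbers are accessible; every number less than an accessible number is accessible; there exist numbers that are not accessible (called huge). Only finite sets are sets; the class of accessible numbers is a proper class contained in a finite set $[0..N]$ for any huge $N$. A condition is objective if it is specified without using the notion of accessibility, and definite if all its quantifiers are bounded by sets (for natural numbers, of the form $\forall x\le n$ or $\exists x\le n$). Axiom (objective separation): every subclass of a set defined by an objective definite condition is a set. *)

theory Defs
  imports Main
begin

text \<open>
  The framework has an undefined predicate "accessible" on the natural numbers.
  In HOL every predicate on the standard type nat is a set, so the axioms
  (0 accessible, closed under successor, some number not accessible) would be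
  inconsistent on nat.  We therefore work semantically: the natural numbers of
  the framework form an arbitrary structure 'm (a discretely ordered commutative
  semiring with nonnegative elements) together with a predicate acc, subject to
  the framework's axioms.  Objective definite conditions are represented by a
  deep embedding: formulas of the language of arithmetic (0, 1, +, *, =, \<le>)
  which do not mention accessibility and whose quantifiers are all bounded.
\<close>

datatype tm = Var nat | Zero | One | Add tm tm | Mul tm tm

datatype fm =
    Eq tm tm
  | Le tm tm
  | Neg fm
  | Conj fm fm
  | Disj fm fm
  | BAll nat tm fm
  | BEx nat tm fm

fun eval_tm :: "(nat \<Rightarrow> 'm::linordered_semidom) \<Rightarrow> tm \<Rightarrow> 'm" where
  "eval_tm e (Var i) = e i"
| "eval_tm e Zero = 0"
| "eval_tm e One = 1"
| "eval_tm e (Add s t) = eval_tm e s + eval_tm e t"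
| "eval_tm e (Mul s t) = eval_tm e s * eval_tm e t"

fun sat :: "(nat \<Rightarrow> 'm::linordered_semidom) \<Rightarrow> fm \<Rightarrow> bool" where
  "sat e (Eq s t) = (eval_tm e s = eval_tm e t)"
| "sat e (Le s t) = (eval_tm e s \<le> eval_tm e t)"
| "sat e (Neg p) = (\<not> sat e p)"
| "sat e (Conj p q) = (sat e p \<and> sat e q)"
| "sat e (Disj p q) = (sat e p \<or> sat e q)"
| "sat e (BAll x t p) = (\<forall>a. a \<le> eval_tm e t \<longrightarrow> sat (e(x := a)) p)"
| "sat e (BEx x t p) = (\<exists>a. a \<le> eval_tm e t \<and> sat (e(x := a)) p)"

definition nat_like :: "'m::linordered_semidom itself \<Rightarrow> bool" where
  "nat_like _ \<longleftrightarrow> (\<forall>x::'m. 0 \<le> x) \<and> (\<forall>x::'m. x < 1 \<longrightarrow> x = 0)"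

text \<open>Objective separation for number conditions: for every objective definite
  condition phi (in variable x, with arbitrary parameters e) and every bound n,
  the subclass {a \<le> n. phi a} is a (finite) set; for numbers this amounts to
  the least number principle for such classes, stated here as: every nonempty
  class defined by an objective definite condition has a least element.\<close>
definition objective_separation :: "'m::linordered_semidom itself \<Rightarrow> bool" where
  "objective_separation _ \<longleftrightarrow>
     (\<forall>(p::fm) x (e::nat \<Rightarrow> 'm). (\<exists>a. sat (e(x := a)) p) \<longrightarrow>
        (\<exists>a. sat (e(x := a)) p \<and> (\<forall>b. b < a \<longrightarrow> \<not> sat (e(x := b)) p)))"

definition accessibility :: "('m::linordered_semidom \<Rightarrow> bool) \<Rightarrow> bool" where
  "accessibility acc \<longleftrightarrow>
     acc 0 \<and> acc 1 \<and>
     (\<forall>a b. acc a \<longrightarrow> acc b \<longrightarrow> acc (a + b)) \<and>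
     (\<forall>a b. acc a \<longrightarrow> acc b \<longrightarrow> acc (a * b)) \<and>
     (\<forall>a b. acc b \<longrightarrow> a < b \<longrightarrow> acc a) \<and>
     (\<exists>n. \<not> acc n)"

definition huge :: "('m::linordered_semidom \<Rightarrow> bool) \<Rightarrow> 'm \<Rightarrow> bool" where
  "huge acc n \<longleftrightarrow> \<not> acc n"

end

theory Submission
  imports Defs
begin

text \<open>Overspill.  If no huge number satisfied P, then P would define exactly the
  accessible numbers.  These contain 0 and are closed under successor, so
  induction for objective definite conditions (a consequence of objective
  separation) would make every number accessible, contradicting the existence
  of huge numbers.\<close>

lemma nat_like_predecessor:
  fixes a :: "'m::linordered_semidom"
  assumes "nat_like TYPE('m)" and "a \<noteq> 0"
  obtains b where "a = b + 1" and "b < a"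
proof
  have "1 \<le> a"
    using assms unfolding nat_like_def by (meson not_le)
  then show "a = (a - 1) + 1"
    by (simp add: le_add_diff_inverse2)
  then show "a - 1 < a"
    by (metis less_add_one)
qed

lemma objective_induction:
  fixes e :: "nat \<Rightarrow> 'm::linordered_semidom"
  assumes "nat_like TYPE('m)" and "objective_separation TYPE('m)"
    and zero: "sat (e(x := 0)) P"
    and step: "\<And>b. sat (e(x := b)) P \<Longrightarrow> sat (e(x := b + 1)) P"
  shows "sat (e(x := a)) P"
proof (rule ccontr)
  assume "\<not> sat (e(x := a)) P"
  then have "sat (e(x := a)) (Neg P)"
    by simp
  then obtain c where c: "\<not> sat (e(x := c)) P"
    and least: "\<And>b. b < c \<Longrightarrow> sat (e(x := b)) P"
    using assms(2) unfolding objective_separation_def by fastforce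
  have "c \<noteq> 0"
    using c zero by auto
  then obtain b where "c = b + 1" and "b < c"
    using assms(1) nat_like_predecessor by blast
  then show False
    using c least step by blast
qed

theorem mainTheorem2:
  fixes acc :: "'m::linordered_semidom \<Rightarrow> bool"
    and P :: fm and x :: nat and e :: "nat \<Rightarrow> 'm"
  assumes "nat_like TYPE('m)"
    and "objective_separation TYPE('m)"
    and "accessibility acc"
    and "\<forall>a. acc a \<longrightarrow> sat (e(x := a)) P"
  shows "\<exists>n. huge acc n \<and> sat (e(x := n)) P"
proof (rule ccontr)
  assume "\<not> ?thesis"
  then have P_iff_acc: "sat (e(x := a)) P \<longleftrightarrow> acc a" for a
    using assms(4) by (auto simp: huge_def)
  obtain n where "\<not> acc n"
    using assms(3) by (auto simp: accessibility_def)
  moreover have "acc n"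
    unfolding P_iff_acc [symmetric]
  proof (rule objective_induction [OF assms(1,2)])
    show "sat (e(x := 0)) P"
      using assms(3) by (simp add: P_iff_acc accessibility_def)
    show "sat (e(x := b + 1)) P" if "sat (e(x := b)) P" for b
      using that assms(3) by (simp add: P_iff_acc accessibility_def)
  qed
  ultimately show False
    by contradiction
qed

end
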